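(* Let $N\ge 2$, let $v_1,\dots,v_N$ be distinct real numbers and let $p(v_1),\dots,p(v_N)>0$ with $\sum_{n}p(v_n)=1$ be the prior distribution of the payoff $\tilde v$. Let $\lambda>0$, $\sigma_Z>0$, $T>0$, and let $G$ be the CDF of $N(0,\sigma_Z^2T)$. Consider the informed trader's problem $$\max_{p(\cdot|\cdot),\,q(\cdot)}\ \int \mathbb E[\tilde v|s]\,G^{-1}(Q(s))\,q(s)\,ds-\lambda\Big\{\sum_{n=1}^N\int \log\big(p(v_n|s)\big)p(v_n|s)q(s)\,ds-\sum_{n=1}^N\log\big(p(v_n)\big)p(v_n)\Big\}$$ subject to $\sum_{n=1}^N p(v_n|s)=1$ for every $s$ and $\int p(v_n|s)q(s)\,ds=p(v_n)$ for every $1\le n\le N$, over continuous signal structures as described in the context. Then: (i) The optimal posterior probabilities are $$p(v_n|s)=\frac{e^{\frac1\lambda[v_nG^{-1}(Q(s))+\mu_n]}}{\sum_{n'=1}^N e^{\frac1\lambda[v_{n'}G^{-1}(Q(s))+\mu_{n'}]}},\qquad s\in\operatorname{support}(q),\ n\in\{1,\dots,N\},$$ where a vector $(\mu_1,\dots,\mu_N)\in\mathbb R^N$ such that the Bayes plausibility constraint $\int p(v_n|s)q(s)\,ds=p(v_n)$, $1\le n\le N$, holds exists and is unique up to adding a common constant to all coordinates. (ii) Any continuous signal $\tilde s$ such that $s\mapsto\mathbb E[\tilde v|s]$ is strictly increasing achieves the same optimal value $$\lambda\,\mathbb E\Big[\log\Big(\sum_{n=1}^N e^{(v_n\tilde z+\mu_n)/\lambda}\Big)\Big]+\lambda\sum_{n=1}^N\log\big(p(v_n)\big)p(v_n)-\sum_{n=1}^N\mu_np(v_n),$$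 where $\tilde z\sim N(0,\sigma_Z^2T)$ and $(\mu_1,\dots,\mu_N)$ is as in (i). (iii) Under the optimal posteriors of (i), the conditional expected payoff $\mathbb E[\tilde v|\tilde s]$ has the same distribution as $$\frac{\sum_{n=1}^N v_n e^{(v_n\tilde z+\mu_n)/\lambda}}{\sum_{n=1}^N e^{(v_n\tilde z+\mu_n)/\lambda}},\qquad \tilde z\sim N(0,\sigma_Z^2T);$$ in particular, any continuous signal $\tilde s$ leads to the same distribution of the expected payoff.
   Context: A continuous signal structure consists of a probability density $q$ on $\mathbb R$ (the marginal density of the signal $\tilde s$, with CDF $Q$) together with posterior probabilities $p(v_n|s)\ge 0$, $s\in\operatorname{support}(q)$, of the payoff given the signal; one writes $\mathbb E[\tilde v|s]=\sum_{n}v_np(v_n|s)$, and signals are restricted to those for which $s\mapsto\mathbb E[\tilde v|s]$ is strictly increasing on $\operatorname{support}(q)$. The objective is the informed trader's unconditional expected profit in the continuous-time Kyle–Back equilibrium (with noise trades $\sigma_Z B_t$ on $[0,T]$) minus the mutual-information cost $\lambda I(\tilde s;\tilde v)$ of acquiring the signal. *)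

theory Defs
  imports "HOL-Probability.Probability"
begin

text \<open>Payoff values v 1..v N, prior pr 1..pr N, cost parameter lam,
  sd = standard deviation of the noise-trade total sigma_Z * sqrt T.\<close>

definition normal_meas :: "real \<Rightarrow> real measure" where
  "normal_meas sd = density lborel (\<lambda>x. ennreal (normal_density 0 sd x))"

definition G :: "real \<Rightarrow> real \<Rightarrow> real" where
  "G sd x = cdf (normal_meas sd) x"

definition Ginv :: "real \<Rightarrow> real \<Rightarrow> real" where
  "Ginv sd u = (THE x. G sd x = u)"

definition sig_meas :: "(real \<Rightarrow> real) \<Rightarrow> real measure" where
  "sig_meas q = density lborel (\<lambda>s. ennreal (q s))"

definition sigQ :: "(real \<Rightarrow> real) \<Rightarrow> real \<Rightarrow> real" where
  "sigQ q s = cdf (sig_meas q) s"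

definition is_density :: "(real \<Rightarrow> real) \<Rightarrow> bool" where
  "is_density q \<longleftrightarrow> q \<in> borel_measurable borel \<and> (\<forall>s. 0 \<le> q s)
     \<and> integrable lborel q \<and> (LINT s|lborel. q s) = 1"

definition supp :: "(real \<Rightarrow> real) \<Rightarrow> real set" where
  "supp q = {s. 0 < q s}"

definition cond_mean :: "nat \<Rightarrow> (nat \<Rightarrow> real) \<Rightarrow> (nat \<Rightarrow> real \<Rightarrow> real) \<Rightarrow> real \<Rightarrow> real" where
  "cond_mean N v p s = (\<Sum>n\<in>{1..N}. v n * p n s)"

definition signal_structure :: "nat \<Rightarrow> (nat \<Rightarrow> real) \<Rightarrow> (nat \<Rightarrow> real \<Rightarrow> real) \<Rightarrow> (real \<Rightarrow> real) \<Rightarrow> bool" where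
  "signal_structure N v p q \<longleftrightarrow> is_density q
     \<and> (\<forall>n\<in>{1..N}. p n \<in> borel_measurable borel)
     \<and> (\<forall>s\<in>supp q. (\<forall>n\<in>{1..N}. 0 \<le> p n s) \<and> (\<Sum>n\<in>{1..N}. p n s) = 1)
     \<and> strict_mono_on (supp q) (cond_mean N v p)"

definition bayes_plausible :: "nat \<Rightarrow> (nat \<Rightarrow> real) \<Rightarrow> (nat \<Rightarrow> real \<Rightarrow> real) \<Rightarrow> (real \<Rightarrow> real) \<Rightarrow> bool" where
  "bayes_plausible N pr p q \<longleftrightarrow> (\<forall>n\<in>{1..N}. (LINT s|lborel. p n s * q s) = pr n)"

text \<open>Expected profit minus lam times mutual information.\<close>
definition objective :: "nat \<Rightarrow> (nat \<Rightarrow> real) \<Rightarrow> (nat \<Rightarrow> real) \<Rightarrow> real \<Rightarrow> real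
    \<Rightarrow> (nat \<Rightarrow> real \<Rightarrow> real) \<Rightarrow> (real \<Rightarrow> real) \<Rightarrow> real" where
  "objective N v pr lam sd p q =
     (LINT s|lborel. cond_mean N v p s * Ginv sd (sigQ q s) * q s)
     - lam * ((\<Sum>n\<in>{1..N}. LINT s|lborel. ln (p n s) * p n s * q s)
              - (\<Sum>n\<in>{1..N}. ln (pr n) * pr n))"

definition opt_post :: "nat \<Rightarrow> (nat \<Rightarrow> real) \<Rightarrow> real \<Rightarrow> real \<Rightarrow> (nat \<Rightarrow> real)
    \<Rightarrow> (real \<Rightarrow> real) \<Rightarrow> nat \<Rightarrow> real \<Rightarrow> real" where
  "opt_post N v lam sd mu q n s =
     exp ((v n * Ginv sd (sigQ q s) + mu n) / lam)
     / (\<Sum>m\<in>{1..N}. exp ((v m * Ginv sd (sigQ q s) + mu m) / lam))"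

definition opt_value :: "nat \<Rightarrow> (nat \<Rightarrow> real) \<Rightarrow> (nat \<Rightarrow> real) \<Rightarrow> real \<Rightarrow> real
    \<Rightarrow> (nat \<Rightarrow> real) \<Rightarrow> real" where
  "opt_value N v pr lam sd mu =
     lam * (LINT z|normal_meas sd. ln (\<Sum>n\<in>{1..N}. exp ((v n * z + mu n) / lam)))
     + lam * (\<Sum>n\<in>{1..N}. ln (pr n) * pr n) - (\<Sum>n\<in>{1..N}. mu n * pr n)"

definition logit_mean :: "nat \<Rightarrow> (nat \<Rightarrow> real) \<Rightarrow> real \<Rightarrow> (nat \<Rightarrow> real) \<Rightarrow> real \<Rightarrow> real" where
  "logit_mean N v lam mu z =
     (\<Sum>n\<in>{1..N}. v n * exp ((v n * z + mu n) / lam))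
     / (\<Sum>n\<in>{1..N}. exp ((v n * z + mu n) / lam))"

end

theory Submission
  imports Defs
begin

text \<open>Write \<open>z = G\<^sup>-\<^sup>1 (Q s)\<close> for the normal score of the signal; for every continuous signal it
  is \<open>N(0, \<sigma>\<^sub>Z\<^sup>2 T)\<close>-distributed (inverse probability integral transform). For Bayes-plausible
  posteriors \<open>p\<close>, Gibbs' variational inequality for the log-sum-exp of the scores
  \<open>(v\<^sub>n z + \<mu>\<^sub>n) / \<lambda>\<close> shows that the objective equals the dual value
  \<open>\<lambda> E[log \<Sum> exp ((v\<^sub>n z + \<mu>\<^sub>n) / \<lambda>)] + \<lambda> \<Sum> p(v\<^sub>n) log p(v\<^sub>n) - \<Sum> \<mu>\<^sub>n p(v\<^sub>n)\<close> minus \<open>\<lambda>\<close> times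
  the expected Kullback--Leibler divergence of \<open>p(\<cdot>|s)\<close> from the logit posteriors. Hence every
  feasible structure is bounded by the dual value for every \<open>\<mu>\<close>, with equality exactly for logit
  posteriors, and the value is independent of the signal.

  A Bayes-plausible \<open>\<mu>\<close> exists because the dual value is continuous, invariant under common
  shifts and coercive modulo them; at a minimiser, one-sided variations of a single \<open>\<mu>\<^sub>k\<close> force
  \<open>E[softmax\<^sub>k] = p(v\<^sub>k)\<close>. Two Bayes-plausible multipliers attain each other's dual value, so
  their logit posteriors agree and the multipliers differ by a constant. Finally
  \<open>E[v|s]\<close> is the logit mean evaluated at the normal score, which gives (iii).\<close>

lemma measure_density_lborel_singleton:
  assumes "f \<in> borel_measurable borel"
  shows "measure (density lborel (\<lambda>x. ennreal (f x))) {a} = 0"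
proof -
  have "AE x in lborel. x \<noteq> a"
    by (rule AE_I'[of "{a}"]) auto
  then have "AE x in lborel. x \<in> {a} \<longrightarrow> ennreal (f x) = 0"
    by eventually_elim auto
  then have "{a} \<in> null_sets (density lborel (\<lambda>x. ennreal (f x)))"
    using assms by (subst null_sets_density_iff) auto
  then show ?thesis
    by (simp add: measure_eq_0_null_sets)
qed

context real_distribution
begin

lemma borel_measurable_cdf [measurable]: "cdf M \<in> borel_measurable borel"
  using cdf_nondecreasing by (intro borel_measurable_mono) (simp add: mono_def)

lemma cdf_attains_value:
  assumes atomless: "\<And>x. measure M {x} = 0" and t: "0 < t" "t < 1"
  obtains x where "cdf M x = t"
proof -
  obtain a where a: "cdf M a < t"
    using order_tendstoD(2)[OF cdf_lim_at_bot t(1)] by (auto simp: eventually_at_bot_linorder)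
  obtain b where b: "t < cdf M b"
    using order_tendstoD(1)[OF cdf_lim_at_top_prob t(2)] by (auto simp: eventually_at_top_linorder)
  have "a \<le> b"
    using a b cdf_nondecreasing[of b a] by (cases "a \<le> b") auto
  moreover have "continuous_on {a..b} (cdf M)"
    using atomless by (simp add: continuous_at_imp_continuous_on isCont_cdf)
  ultimately show ?thesis
    using IVT'[of "cdf M" a t b] a b that by auto
qed

lemma prob_cdf_le:
  assumes atomless: "\<And>x. measure M {x} = 0" and t: "0 < t" "t < 1"
  shows "prob {x. cdf M x \<le> t} = t"
proof -
  define A where "A = {x. cdf M x \<le> t}"
  obtain x0 where x0: "cdf M x0 = t"
    using cdf_attains_value[OF atomless t] .
  obtain b where b: "\<And>x. x \<ge> b \<Longrightarrow> t < cdf M x"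
    using order_tendstoD(1)[OF cdf_lim_at_top_prob t(2)] by (auto simp: eventually_at_top_linorder)
  have bdd: "bdd_above A"
    unfolding A_def bdd_above_def using b by (auto intro!: exI[of _ b] simp: not_less[symmetric])
  have "closed A"
    unfolding A_def using atomless
    by (intro closed_Collect_le continuous_on_const)
      (simp add: continuous_at_imp_continuous_on isCont_cdf)
  moreover have "x0 \<in> A"
    using x0 by (simp add: A_def)
  ultimately have "Sup A \<in> A" and "x0 \<le> Sup A"
    using bdd by (auto intro: closed_contains_Sup cSup_upper)
  then have cdf_Sup: "cdf M (Sup A) = t"
    using cdf_nondecreasing[of x0 "Sup A"] x0 by (simp add: A_def)
  have "A = {..Sup A}"
  proof (intro subset_antisym subsetI)
    fix x assume "x \<in> A"
    then show "x \<in> {..Sup A}" using bdd by (simp add: cSup_upper)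
  next
    fix x assume "x \<in> {..Sup A}"
    then show "x \<in> A" using cdf_nondecreasing[of x "Sup A"] cdf_Sup by (simp add: A_def)
  qed
  then show ?thesis
    using cdf_Sup by (simp add: A_def cdf_def)
qed

lemma AE_cdf_strictly_between:
  assumes atomless: "\<And>x. measure M {x} = 0"
  shows "AE x in M. 0 < cdf M x \<and> cdf M x < 1"
proof -
  have cdf_meas: "cdf M \<in> borel_measurable M"
    by measurable
  have "prob {x. cdf M x \<le> 0} \<le> e" if "0 < e" for e
  proof -
    have "prob {x. cdf M x \<le> 0} \<le> prob {x. cdf M x \<le> min e (1/2)}"
      using that cdf_meas by (intro finite_measure_mono) auto
    then show ?thesis
      using prob_cdf_le[OF atomless, of "min e (1/2)"] that by simp
  qed
  then have "prob {x. cdf M x \<le> 0} = 0"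
    using field_le_epsilon[of "prob {x. cdf M x \<le> 0}" 0] measure_nonneg[of M]
    by (simp add: order_antisym)
  moreover have "prob {x. 1 \<le> cdf M x} \<le> e" if "0 < e" for e
  proof -
    define t where "t = max (1 - e) (1/2)"
    have t: "0 < t" "t < 1" "1 - e \<le> t"
      using that by (auto simp: t_def)
    have "prob {x. 1 \<le> cdf M x} \<le> prob (space M - {x. cdf M x \<le> t})"
      using t cdf_meas by (intro finite_measure_mono) auto
    also have "\<dots> = 1 - t"
      using cdf_meas prob_cdf_le[OF atomless t(1,2)] by (subst prob_compl) auto
    finally show ?thesis
      using t by simp
  qed
  then have "prob {x. 1 \<le> cdf M x} = 0"
    using field_le_epsilon[of "prob {x. 1 \<le> cdf M x}" 0] measure_nonneg[of M]
    by (simp add: order_antisym)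
  ultimately have "{x. cdf M x \<le> 0} \<union> {x. 1 \<le> cdf M x} \<in> null_sets M"
    using cdf_meas by (auto simp: emeasure_eq_measure null_setsI)
  then show ?thesis
    by (rule AE_I') auto
qed

end

lemma real_distribution_normal_meas: "0 < sd \<Longrightarrow> real_distribution (normal_meas sd)"
  unfolding real_distribution_def real_distribution_axioms_def normal_meas_def
  using prob_space_normal_density by simp

lemma normal_meas_singleton: "measure (normal_meas sd) {x} = 0"
  unfolding normal_meas_def by (rule measure_density_lborel_singleton) simp

lemma real_distribution_sig_meas:
  assumes "is_density q"
  shows "real_distribution (sig_meas q)"
proof -
  have "emeasure (sig_meas q) UNIV = 1"
    using assms unfolding sig_meas_def is_density_def
    by (simp add: emeasure_density nn_integral_eq_integral)
  then show ?thesis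
    unfolding real_distribution_def real_distribution_axioms_def sig_meas_def
    by (auto intro!: prob_spaceI)
qed

lemma sig_meas_singleton: "is_density q \<Longrightarrow> measure (sig_meas q) {x} = 0"
  unfolding sig_meas_def is_density_def by (intro measure_density_lborel_singleton) simp

lemma AE_imp_ex_density_pos:
  assumes q: "is_density q" and ae: "AE s in lborel. 0 < q s \<longrightarrow> P s"
  obtains s where "0 < q s" "P s"
proof (rule ccontr)
  assume "\<not> thesis"
  have "AE s in lborel. q s = 0"
    using ae
  proof eventually_elim
    case (elim s)
    have "0 \<le> q s"
      using q by (simp add: is_density_def)
    moreover have "\<not> 0 < q s"
      using elim that[of s] \<open>\<not> thesis\<close> by blast
    ultimately show "q s = 0"
      by simp
  qed
  then have "(LINT s|lborel. q s) = 0"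
    by (rule integral_eq_zero_AE)
  then show False
    using q by (simp add: is_density_def)
qed

lemma G_strict_mono:
  assumes sd: "0 < sd"
  shows "strict_mono (G sd)"
proof (rule strict_monoI)
  fix x y :: real assume "x < y"
  interpret real_distribution "normal_meas sd"
    using real_distribution_normal_meas[OF sd] .
  have "{x<..y} \<notin> null_sets (normal_meas sd)"
  proof
    assume "{x<..y} \<in> null_sets (normal_meas sd)"
    then have "AE t in lborel. t \<in> {x<..y} \<longrightarrow> normal_density 0 sd t = 0"
      unfolding normal_meas_def by (subst (asm) null_sets_density_iff) auto
    then have "AE t in lborel. t \<notin> {x<..y}"
      by eventually_elim (metis normal_density_pos[OF sd] less_irrefl)
    then have "{x<..y} \<in> null_sets lborel"
      by (subst AE_iff_null_sets) auto
    then have "emeasure lborel {x<..y} = 0"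
      by (rule null_setsD1)
    then show False
      using \<open>x < y\<close> by simp
  qed
  then have "prob {x<..y} \<noteq> 0"
    using null_setsI[of "normal_meas sd" "{x<..y}"] by (auto simp: emeasure_eq_measure)
  then have "0 < prob {x<..y}"
    by (simp add: zero_less_measure_iff)
  then show "G sd x < G sd y"
    using cdf_diff_eq[OF \<open>x < y\<close>] unfolding G_def by linarith
qed

lemma G_strictly_between:
  assumes sd: "0 < sd"
  shows "0 < G sd x" "G sd x < 1"
proof -
  interpret real_distribution "normal_meas sd"
    using real_distribution_normal_meas[OF sd] .
  show "0 < G sd x"
    using strict_monoD[OF G_strict_mono[OF sd], of "x - 1" x] cdf_nonneg[of "x - 1"]
    unfolding G_def by simp
  show "G sd x < 1"
    using strict_monoD[OF G_strict_mono[OF sd], of x "x + 1"] cdf_bounded_prob[of "x + 1"]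
    unfolding G_def by simp
qed

lemma G_Ginv:
  assumes sd: "0 < sd" and u: "0 < u" "u < 1"
  shows "G sd (Ginv sd u) = u"
proof -
  interpret real_distribution "normal_meas sd"
    using real_distribution_normal_meas[OF sd] .
  obtain x where x: "G sd x = u"
    using cdf_attains_value[OF normal_meas_singleton u] unfolding G_def .
  show ?thesis
    unfolding Ginv_def
    by (rule theI[of _ x]) (use x strict_mono_eq[OF G_strict_mono[OF sd]] in auto)
qed

lemma Ginv_le_iff:
  assumes sd: "0 < sd" and u: "0 < u" "u < 1"
  shows "Ginv sd u \<le> x \<longleftrightarrow> u \<le> G sd x"
  using strict_mono_less_eq[OF G_strict_mono[OF sd], of "Ginv sd u" x] G_Ginv[OF assms] by simp

text \<open>Outside \<open>(0, 1)\<close> the description in \<open>Ginv\<close> is empty, so all these values coincide.\<close>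

lemma Ginv_outside_unit_interval:
  assumes sd: "0 < sd" and u: "\<not> (0 < u \<and> u < 1)"
  shows "Ginv sd u = Ginv sd 0"
proof -
  have "G sd x \<noteq> u" "G sd x \<noteq> 0" for x
    using G_strictly_between[OF sd, of x] u by auto
  then have "(\<lambda>x. G sd x = u) = (\<lambda>x. G sd x = 0)"
    by (simp add: fun_eq_iff)
  then show ?thesis
    unfolding Ginv_def by simp
qed

lemma borel_measurable_Ginv [measurable]:
  assumes sd: "0 < sd"
  shows "Ginv sd \<in> borel_measurable borel"
proof (subst borel_measurable_iff_le, intro allI)
  fix x
  have "{u \<in> space borel. Ginv sd u \<le> x} =
      ({0<..<1} \<inter> {..G sd x}) \<union> (if Ginv sd 0 \<le> x then - {0<..<1} else {})"
  proof (rule set_eqI)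
    fix u
    show "u \<in> {u \<in> space borel. Ginv sd u \<le> x} \<longleftrightarrow>
      u \<in> ({0<..<1} \<inter> {..G sd x}) \<union> (if Ginv sd 0 \<le> x then - {0<..<1} else {})"
      using Ginv_le_iff[OF sd, of u x] Ginv_outside_unit_interval[OF sd, of u]
      by (cases "0 < u \<and> u < 1") auto
  qed
  then show "{u \<in> space borel. Ginv sd u \<le> x} \<in> sets borel"
    by simp
qed

lemma distr_Ginv_cdf:
  assumes M: "real_distribution M" and atomless: "\<And>x. measure M {x} = 0" and sd: "0 < sd"
  shows "distr M borel (\<lambda>x. Ginv sd (cdf M x)) = normal_meas sd"
proof -
  interpret real_distribution M
    using M .
  have cdf_meas: "cdf M \<in> borel_measurable M"
    by measurable
  then have meas: "(\<lambda>x. Ginv sd (cdf M x)) \<in> borel_measurable M"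
    using borel_measurable_Ginv[OF sd] by measurable
  have "cdf (distr M borel (\<lambda>x. Ginv sd (cdf M x))) y = G sd y" for y
  proof -
    have "cdf (distr M borel (\<lambda>x. Ginv sd (cdf M x))) y = prob {x. Ginv sd (cdf M x) \<le> y}"
      using meas by (simp add: cdf_def measure_distr vimage_def)
    also have "\<dots> = prob {x. cdf M x \<le> G sd y}"
    proof (rule measure_eq_AE)
      show "AE x in M. x \<in> {x. Ginv sd (cdf M x) \<le> y} \<longleftrightarrow> x \<in> {x. cdf M x \<le> G sd y}"
        using AE_cdf_strictly_between[OF atomless] by eventually_elim (simp add: Ginv_le_iff[OF sd])
    qed (use meas cdf_meas in simp_all)
    also have "\<dots> = G sd y"
      using prob_cdf_le[OF atomless G_strictly_between[OF sd]] .
    finally show ?thesis .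
  qed
  then show ?thesis
    using meas real_distribution_normal_meas[OF sd]
    by (intro cdf_unique ext) (auto simp: G_def)
qed

definition softmax :: "'a set \<Rightarrow> ('a \<Rightarrow> real) \<Rightarrow> 'a \<Rightarrow> real" where
  "softmax A a n = exp (a n) / (\<Sum>m\<in>A. exp (a m))"

definition log_sum_exp :: "'a set \<Rightarrow> ('a \<Rightarrow> real) \<Rightarrow> real" where
  "log_sum_exp A a = ln (\<Sum>n\<in>A. exp (a n))"

text \<open>The Kullback--Leibler divergence of \<open>p\<close> from \<open>softmax A a\<close>, written as the gap in Gibbs'
  variational inequality \<open>\<Sum> p a + entropy p \<le> log_sum_exp A a\<close>; since \<open>ln 0 = 0\<close>, zero weights
  contribute nothing.\<close>

definition gibbs_gap :: "'a set \<Rightarrow> ('a \<Rightarrow> real) \<Rightarrow> ('a \<Rightarrow> real) \<Rightarrow> real" where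
  "gibbs_gap A a p = log_sum_exp A a - (\<Sum>n\<in>A. p n * a n - p n * ln (p n))"

lemma mult_ln_ratio_le:
  fixes p w :: real
  assumes p: "0 \<le> p" and w: "0 < w"
  shows "p * (ln w - ln p) \<le> w - p"
    and "p * (ln w - ln p) = w - p \<longleftrightarrow> p = w"
proof -
  consider "p = 0" | "0 < p"
    using p by linarith
  then have "p * (ln w - ln p) \<le> w - p \<and> (p * (ln w - ln p) = w - p \<longleftrightarrow> p = w)"
  proof cases
    case 1
    then show ?thesis
      using w by simp
  next
    case 2
    have "p * (ln w - ln p) = p * ln (w / p)" and "w - p = p * (w / p - 1)"
      using 2 w by (simp_all add: ln_div field_simps)
    moreover have "ln (w / p) \<le> w / p - 1"
      using 2 w by (intro ln_le_minus_one) simp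
    moreover have "ln (w / p) = w / p - 1 \<longleftrightarrow> p = w"
      using 2 w ln_eq_minus_one[of "w / p"] by auto
    ultimately show ?thesis
      using 2 by simp
  qed
  then show "p * (ln w - ln p) \<le> w - p" "p * (ln w - ln p) = w - p \<longleftrightarrow> p = w"
    by blast+
qed

context
  fixes A :: "'a set"
  assumes A: "finite A" "A \<noteq> {}"
begin

lemma sum_exp_pos: "0 < (\<Sum>n\<in>A. exp (a n :: real))"
  using A by (intro sum_pos) auto

lemma softmax_pos: "0 < softmax A a n"
  unfolding softmax_def using sum_exp_pos[of a] by simp

lemma sum_softmax: "(\<Sum>n\<in>A. softmax A a n) = 1"
  unfolding softmax_def using sum_exp_pos[of a] by (simp add: sum_divide_distrib[symmetric])

lemma softmax_le_1: "n \<in> A \<Longrightarrow> softmax A a n \<le> 1"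
  using member_le_sum[of n A "softmax A a"] softmax_pos sum_softmax A(1) by (simp add: less_imp_le)

lemma ln_softmax: "ln (softmax A a n) = a n - log_sum_exp A a"
  unfolding softmax_def log_sum_exp_def using sum_exp_pos[of a] by (simp add: ln_div)

lemma log_sum_exp_add_const:
  assumes "\<forall>m\<in>A. b m = a m + c"
  shows "log_sum_exp A b = log_sum_exp A a + c"
proof -
  have "(\<Sum>m\<in>A. exp (b m)) = (\<Sum>m\<in>A. exp (a m)) * exp c"
    using assms by (simp add: exp_add sum_distrib_right)
  then show ?thesis
    using sum_exp_pos[of a] by (simp add: log_sum_exp_def ln_mult)
qed

lemma softmax_add_const:
  assumes "\<forall>m\<in>A. b m = a m + c" "n \<in> A"
  shows "softmax A b n = softmax A a n"
proof -
  have "(\<Sum>m\<in>A. exp (b m)) = (\<Sum>m\<in>A. exp (a m)) * exp c"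
    using assms by (simp add: exp_add sum_distrib_right)
  then show ?thesis
    using assms by (simp add: softmax_def exp_add)
qed

lemma softmax_eq_imp_add_const:
  assumes "\<forall>n\<in>A. softmax A b n = softmax A a n"
  shows "\<exists>c. \<forall>n\<in>A. b n = a n + c"
proof (intro exI ballI)
  fix n assume "n \<in> A"
  then have "ln (softmax A b n) = ln (softmax A a n)"
    using assms by simp
  then show "b n = a n + (log_sum_exp A b - log_sum_exp A a)"
    unfolding ln_softmax by simp
qed

lemma log_sum_exp_ge:
  assumes "n \<in> A"
  shows "a n \<le> log_sum_exp A a"
proof -
  have "ln (softmax A a n) \<le> 0"
    using softmax_le_1[OF assms] softmax_pos[of a n] by simp
  then show ?thesis
    by (simp add: ln_softmax)
qed

lemma log_sum_exp_mono:
  assumes "\<forall>n\<in>A. a n \<le> b n + D"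
  shows "log_sum_exp A a \<le> log_sum_exp A b + D"
proof -
  have "(\<Sum>n\<in>A. exp (a n)) \<le> (\<Sum>n\<in>A. exp (b n + D))"
    using assms by (intro sum_mono) auto
  then have "log_sum_exp A a \<le> log_sum_exp A (\<lambda>n. b n + D)"
    unfolding log_sum_exp_def using sum_exp_pos by simp
  then show ?thesis
    by (simp add: log_sum_exp_add_const[of "\<lambda>n. b n + D" b D])
qed

lemma abs_log_sum_exp_le: "\<bar>log_sum_exp A a\<bar> \<le> ln (card A) + (\<Sum>n\<in>A. \<bar>a n\<bar>)"
proof -
  have bound: "\<bar>a n\<bar> \<le> (\<Sum>m\<in>A. \<bar>a m\<bar>)" if "n \<in> A" for n
    using that A(1) by (intro member_le_sum) auto
  have "log_sum_exp A a \<le> log_sum_exp A (\<lambda>_. 0) + (\<Sum>m\<in>A. \<bar>a m\<bar>)"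
    using bound by (intro log_sum_exp_mono) (auto simp: abs_le_iff)
  moreover have "log_sum_exp A (\<lambda>_. 0) = ln (card A)"
    by (simp add: log_sum_exp_def)
  moreover obtain n where "n \<in> A"
    using A(2) by blast
  then have "- (\<Sum>m\<in>A. \<bar>a m\<bar>) \<le> log_sum_exp A a"
    using bound[of n] log_sum_exp_ge[of n a] by linarith
  moreover have "0 \<le> ln (card A)"
    using A by (simp add: Suc_leI card_gt_0_iff)
  ultimately show ?thesis
    by linarith
qed

text \<open>The increase is exactly \<open>ln (1 + (exp t - 1) w)\<close> for the softmax weight \<open>w\<close> of the raised
  score; then use \<open>ln (1 + x) \<le> x\<close>.\<close>

lemma log_sum_exp_update_le:
  assumes k: "k \<in> A"
  shows "log_sum_exp A (a(k := a k + t)) - log_sum_exp A a \<le> (exp t - 1) * softmax A a k"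
proof -
  define S where "S = (\<Sum>n\<in>A. exp (a n))"
  have "(\<Sum>n\<in>A. exp ((a(k := a k + t)) n))
      = (\<Sum>n\<in>A. exp (a n) + (if n = k then exp (a k) * (exp t - 1) else 0))"
    by (intro sum.cong) (auto simp: exp_add algebra_simps)
  also have "\<dots> = S * (1 + (exp t - 1) * softmax A a k)"
    using k A(1) sum_exp_pos[of a] by (simp add: sum.distrib S_def softmax_def field_simps)
  moreover have gt: "-1 < (exp t - 1) * softmax A a k"
    using softmax_le_1[OF k, of a] mult_pos_pos[OF exp_gt_zero softmax_pos, of t a k]
    by (simp add: left_diff_distrib)
  ultimately have "log_sum_exp A (a(k := a k + t))
      = log_sum_exp A a + ln (1 + (exp t - 1) * softmax A a k)"
    using sum_exp_pos[of a] by (simp add: log_sum_exp_def S_def ln_mult)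
  moreover have "ln (1 + (exp t - 1) * softmax A a k) \<le> (exp t - 1) * softmax A a k"
    using gt by (rule ln_add_one_self_le_self2)
  ultimately show ?thesis
    by simp
qed

lemma gibbs_gap_eq_sum:
  assumes "(\<Sum>n\<in>A. p n) = 1"
  shows "gibbs_gap A a p =
    (\<Sum>n\<in>A. (softmax A a n - p n) - p n * (ln (softmax A a n) - ln (p n)))"
proof -
  have "(\<Sum>n\<in>A. (softmax A a n - p n) - p n * (ln (softmax A a n) - ln (p n)))
      = (\<Sum>n\<in>A. softmax A a n - p n + p n * log_sum_exp A a - (p n * a n - p n * ln (p n)))"
    by (intro sum.cong) (simp_all add: ln_softmax algebra_simps)
  also have "\<dots> = (\<Sum>n\<in>A. softmax A a n) - (\<Sum>n\<in>A. p n) + (\<Sum>n\<in>A. p n) * log_sum_exp A a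
        - (\<Sum>n\<in>A. p n * a n - p n * ln (p n))"
    by (simp add: sum_subtractf sum.distrib sum_distrib_right)
  finally show ?thesis
    using assms by (simp add: sum_softmax gibbs_gap_def)
qed

lemma gibbs_gap_nonneg:
  assumes "\<forall>n\<in>A. 0 \<le> p n" "(\<Sum>n\<in>A. p n) = 1"
  shows "0 \<le> gibbs_gap A a p"
  unfolding gibbs_gap_eq_sum[OF assms(2)]
  using assms(1) mult_ln_ratio_le(1)[OF _ softmax_pos] by (intro sum_nonneg) auto

lemma gibbs_gap_eq_0_iff:
  assumes "\<forall>n\<in>A. 0 \<le> p n" "(\<Sum>n\<in>A. p n) = 1"
  shows "gibbs_gap A a p = 0 \<longleftrightarrow> (\<forall>n\<in>A. p n = softmax A a n)"
proof -
  have "\<forall>n\<in>A. 0 \<le> (softmax A a n - p n) - p n * (ln (softmax A a n) - ln (p n))"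
    using assms(1) mult_ln_ratio_le(1)[OF _ softmax_pos] by auto
  moreover have "(softmax A a n - p n) - p n * (ln (softmax A a n) - ln (p n)) = 0
      \<longleftrightarrow> p n = softmax A a n" if "n \<in> A" for n
    using mult_ln_ratio_le(2)[of "p n" "softmax A a n"] assms(1) that softmax_pos[of a n] by auto
  ultimately show ?thesis
    unfolding gibbs_gap_eq_sum[OF assms(2)] using A(1) by (simp add: sum_nonneg_eq_0_iff)
qed

end

lemma distr_normal_score:
  assumes sd: "0 < sd" and q: "is_density q"
  shows "distr (sig_meas q) borel (\<lambda>s. Ginv sd (sigQ q s)) = normal_meas sd"
  unfolding sigQ_def
  using distr_Ginv_cdf[OF real_distribution_sig_meas[OF q] sig_meas_singleton[OF q] sd] .

lemma borel_measurable_normal_score [measurable]: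
  assumes sd: "0 < sd" and q: "is_density q"
  shows "(\<lambda>s. Ginv sd (sigQ q s)) \<in> borel_measurable borel"
proof -
  interpret real_distribution "sig_meas q"
    using real_distribution_sig_meas[OF q] .
  show ?thesis
    unfolding sigQ_def using borel_measurable_Ginv[OF sd] by measurable
qed

lemma
  assumes sd: "0 < sd" and q: "is_density q"
    and f: "f \<in> borel_measurable borel" "integrable (normal_meas sd) f"
  shows integrable_normal_score: "integrable lborel (\<lambda>s. f (Ginv sd (sigQ q s)) * q s)"
    and integral_normal_score:
      "(LINT s|lborel. f (Ginv sd (sigQ q s)) * q s) = (LINT z|normal_meas sd. f z)"
proof -
  have q_nonneg: "\<And>s. 0 \<le> q s" and q_meas: "q \<in> borel_measurable borel"
    using q by (auto simp: is_density_def)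
  have Z_meas: "(\<lambda>s. Ginv sd (sigQ q s)) \<in> borel_measurable (sig_meas q)"
    using borel_measurable_normal_score[OF sd q] by (simp add: sig_meas_def)
  have fZ_meas: "(\<lambda>s. f (Ginv sd (sigQ q s))) \<in> borel_measurable borel"
    using borel_measurable_normal_score[OF sd q] f(1) by measurable
  have "integrable (sig_meas q) (\<lambda>s. f (Ginv sd (sigQ q s)))"
    using integrable_distr_eq[OF Z_meas f(1)] f(2) distr_normal_score[OF sd q] by simp
  then show "integrable lborel (\<lambda>s. f (Ginv sd (sigQ q s)) * q s)"
    unfolding sig_meas_def using fZ_meas q_meas q_nonneg
    by (subst (asm) integrable_density) (auto simp: mult.commute)
  have "(LINT z|normal_meas sd. f z) = (LINT s|sig_meas q. f (Ginv sd (sigQ q s)))"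
    using integral_distr[OF Z_meas f(1)] distr_normal_score[OF sd q] by simp
  also have "\<dots> = (LINT s|lborel. f (Ginv sd (sigQ q s)) * q s)"
    unfolding sig_meas_def using fZ_meas q_meas q_nonneg
    by (subst integral_density) (auto simp: mult.commute)
  finally show "(LINT s|lborel. f (Ginv sd (sigQ q s)) * q s) = (LINT z|normal_meas sd. f z)"
    by simp
qed

context
  fixes sd :: real
  assumes sd: "0 < sd"
begin

lemma prob_space_normal_meas: "prob_space (normal_meas sd)"
  using real_distribution_normal_meas[OF sd] by (simp add: real_distribution_def)

lemma integrable_normal_meas_const: "integrable (normal_meas sd) (\<lambda>_. c :: real)"
proof -
  interpret prob_space "normal_meas sd"
    by (rule prob_space_normal_meas)
  show ?thesis
    by simp
qed

lemma integral_normal_meas_const: "(LINT z|normal_meas sd. c) = (c :: real)"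
proof -
  interpret prob_space "normal_meas sd"
    by (rule prob_space_normal_meas)
  show ?thesis
    by (simp add: prob_space)
qed

lemma integrable_normal_meas_iff:
  "f \<in> borel_measurable borel \<Longrightarrow>
    integrable (normal_meas sd) f \<longleftrightarrow> integrable lborel (\<lambda>x. normal_density 0 sd x * f x)"
  unfolding normal_meas_def by (subst integrable_density) auto

lemma integrable_normal_meas_abs: "integrable (normal_meas sd) (\<lambda>z. \<bar>z\<bar>)"
  using integrable_normal_moment_abs[OF sd, of 0 1] by (subst integrable_normal_meas_iff) auto

lemma integrable_normal_meas_id: "integrable (normal_meas sd) (\<lambda>z. z)"
  using integrable_normal_moment_nz_1[OF sd, of 0] by (subst integrable_normal_meas_iff) auto

lemma integral_normal_meas_id: "(LINT z|normal_meas sd. z) = 0"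
  using integral_normal_moment_nz_1[OF sd, of 0] unfolding normal_meas_def
  by (subst integral_density) auto

end

definition score :: "(nat \<Rightarrow> real) \<Rightarrow> real \<Rightarrow> (nat \<Rightarrow> real) \<Rightarrow> real \<Rightarrow> nat \<Rightarrow> real" where
  "score v lam mu z n = (v n * z + mu n) / lam"

lemma opt_post_eq_softmax:
  "opt_post N v lam sd mu q n s = softmax {1..N} (score v lam mu (Ginv sd (sigQ q s))) n"
  by (simp add: opt_post_def softmax_def score_def)

lemma logit_mean_eq_softmax:
  "logit_mean N v lam mu z = (\<Sum>n\<in>{1..N}. v n * softmax {1..N} (score v lam mu z) n)"
  by (simp add: logit_mean_def softmax_def score_def sum_divide_distrib)

definition expected_log_sum_exp :: "nat \<Rightarrow> (nat \<Rightarrow> real) \<Rightarrow> real \<Rightarrow> real \<Rightarrow> (nat \<Rightarrow> real) \<Rightarrow> real" where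
  "expected_log_sum_exp N v lam sd mu =
     (LINT z|normal_meas sd. log_sum_exp {1..N} (score v lam mu z))"

lemma opt_value_eq:
  "opt_value N v pr lam sd mu = lam * expected_log_sum_exp N v lam sd mu
    + lam * (\<Sum>n\<in>{1..N}. ln (pr n) * pr n) - (\<Sum>n\<in>{1..N}. mu n * pr n)"
  by (simp add: opt_value_def expected_log_sum_exp_def log_sum_exp_def score_def)

lemma score_update:
  "score v lam (mu(k := mu k + t)) z = (score v lam mu z)(k := score v lam mu z k + t / lam)"
  by (simp add: fun_eq_iff score_def add_divide_distrib)

lemma borel_measurable_log_sum_exp_score [measurable]:
  "(\<lambda>z. log_sum_exp A (score v lam mu z)) \<in> borel_measurable borel"
  unfolding log_sum_exp_def score_def by measurable

lemma borel_measurable_softmax_score [measurable]: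
  "(\<lambda>z. softmax A (score v lam mu z) n) \<in> borel_measurable borel"
  unfolding softmax_def score_def by measurable

definition posterior_family :: "nat \<Rightarrow> (nat \<Rightarrow> real \<Rightarrow> real) \<Rightarrow> (real \<Rightarrow> real) \<Rightarrow> bool" where
  "posterior_family N p q \<longleftrightarrow> (\<forall>n\<in>{1..N}. p n \<in> borel_measurable borel)
     \<and> (\<forall>s\<in>supp q. (\<forall>n\<in>{1..N}. 0 \<le> p n s) \<and> (\<Sum>n\<in>{1..N}. p n s) = 1)"

lemma signal_structure_iff:
  "signal_structure N v p q \<longleftrightarrow>
    is_density q \<and> posterior_family N p q \<and> strict_mono_on (supp q) (cond_mean N v p)"
  by (auto simp: signal_structure_def posterior_family_def)

lemma posterior_family_le_1:
  assumes "posterior_family N p q" "s \<in> supp q" "n \<in> {1..N}"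
  shows "p n s \<le> 1"
  using assms member_le_sum[of n "{1..N}" "\<lambda>m. p m s"] by (auto simp: posterior_family_def)

lemma abs_ln_mult_self_le_1:
  fixes x :: real
  assumes "0 \<le> x" "x \<le> 1"
  shows "\<bar>ln x * x\<bar> \<le> 1"
proof -
  have "x * (ln 1 - ln x) \<le> 1 - x"
    using assms by (intro mult_ln_ratio_le(1)) auto
  moreover have "ln x * x \<le> 0"
    using assms by (cases "x = 0") (auto simp: mult_nonpos_nonneg)
  ultimately show ?thesis
    using assms by (simp add: algebra_simps)
qed

text \<open>Integrand of the duality gap between \<open>opt_value\<close> and \<open>objective\<close>; \<open>G\<^sup>-\<^sup>1 (Q s)\<close> is the
  normal score of the signal.\<close>

definition gap_density :: "nat \<Rightarrow> (nat \<Rightarrow> real) \<Rightarrow> real \<Rightarrow> real \<Rightarrow> (nat \<Rightarrow> real)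
    \<Rightarrow> (nat \<Rightarrow> real \<Rightarrow> real) \<Rightarrow> (real \<Rightarrow> real) \<Rightarrow> real \<Rightarrow> real" where
  "gap_density N v lam sd mu p q s =
     gibbs_gap {1..N} (score v lam mu (Ginv sd (sigQ q s))) (\<lambda>n. p n s) * q s"

definition mean_posterior :: "nat \<Rightarrow> (nat \<Rightarrow> real) \<Rightarrow> real \<Rightarrow> real \<Rightarrow> (nat \<Rightarrow> real) \<Rightarrow> nat \<Rightarrow> real" where
  "mean_posterior N v lam sd mu n = (LINT z|normal_meas sd. softmax {1..N} (score v lam mu z) n)"

lemma isCont_coordinate: "isCont (\<lambda>y :: nat \<Rightarrow> real. y n) x"
  using continuous_on_eq_continuous_at[OF open_UNIV, of "\<lambda>y :: nat \<Rightarrow> real. y n"] by auto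

locale logit_model =
  fixes N :: nat and v :: "nat \<Rightarrow> real" and lam sd :: real
  assumes N: "1 \<le> N" and lam: "0 < lam" and sd: "0 < sd"
begin

lemma index_set: "finite {1..N}" "{1..N} \<noteq> {}"
  using N by auto

lemma integrable_log_sum_exp_score:
  "integrable (normal_meas sd) (\<lambda>z. log_sum_exp {1..N} (score v lam mu z))"
proof (rule Bochner_Integration.integrable_bound)
  define B where "B z = ln N + ((\<Sum>n\<in>{1..N}. \<bar>v n\<bar>) * \<bar>z\<bar> + (\<Sum>n\<in>{1..N}. \<bar>mu n\<bar>)) / lam" for z
  show "integrable (normal_meas sd) B"
    unfolding B_def
    by (intro Bochner_Integration.integrable_add Bochner_Integration.integrable_divide
        Bochner_Integration.integrable_mult_right integrable_normal_meas_const[OF sd]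
        integrable_normal_meas_abs[OF sd])
  have "\<bar>score v lam mu z n\<bar> \<le> (\<bar>v n\<bar> * \<bar>z\<bar> + \<bar>mu n\<bar>) / lam" for z n
    using lam abs_triangle_ineq[of "v n * z" "mu n"]
    by (simp add: score_def abs_mult divide_right_mono)
  then have "(\<Sum>n\<in>{1..N}. \<bar>score v lam mu z n\<bar>) \<le> (\<Sum>n\<in>{1..N}. (\<bar>v n\<bar> * \<bar>z\<bar> + \<bar>mu n\<bar>) / lam)" for z
    by (intro sum_mono)
  moreover have "(\<Sum>n\<in>{1..N}. (\<bar>v n\<bar> * \<bar>z\<bar> + \<bar>mu n\<bar>) / lam) = B z - ln N" for z
    by (simp add: B_def sum_divide_distrib[symmetric] sum.distrib sum_distrib_right)
  ultimately have bound: "(\<Sum>n\<in>{1..N}. \<bar>score v lam mu z n\<bar>) \<le> B z - ln N" for z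
    by simp
  have "\<bar>log_sum_exp {1..N} (score v lam mu z)\<bar> \<le> B z" for z
    using abs_log_sum_exp_le[OF index_set, of "score v lam mu z"] bound[of z] by simp
  then show "AE z in normal_meas sd. norm (log_sum_exp {1..N} (score v lam mu z)) \<le> norm (B z)"
    by (intro AE_I2) (metis abs_ge_self order_trans real_norm_def)
qed (use borel_measurable_log_sum_exp_score in \<open>simp add: normal_meas_def\<close>)

lemma integrable_softmax_score:
  assumes "n \<in> {1..N}"
  shows "integrable (normal_meas sd) (\<lambda>z. softmax {1..N} (score v lam mu z) n)"
proof (rule Bochner_Integration.integrable_bound)
  show "integrable (normal_meas sd) (\<lambda>_. 1 :: real)"
    by (rule integrable_normal_meas_const[OF sd])
  show "AE z in normal_meas sd. norm (softmax {1..N} (score v lam mu z) n) \<le> norm (1 :: real)"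
    using softmax_pos[OF index_set] softmax_le_1[OF index_set assms]
    by (intro AE_I2) (simp add: less_imp_le)
qed (use borel_measurable_softmax_score in \<open>simp add: normal_meas_def\<close>)

lemma posterior_family_opt_post:
  assumes q: "is_density q"
  shows "posterior_family N (opt_post N v lam sd mu q) q"
proof -
  have "(\<lambda>s. softmax {1..N} (score v lam mu (Ginv sd (sigQ q s))) n) \<in> borel_measurable borel" for n
    using borel_measurable_softmax_score borel_measurable_normal_score[OF sd q]
    by (rule measurable_compose[rotated])
  then show ?thesis
    unfolding posterior_family_def opt_post_eq_softmax
    using softmax_pos[OF index_set] sum_softmax[OF index_set] by (auto intro: less_imp_le)
qed

lemma lam_mult_gap_density:
  "lam * gap_density N v lam sd mu p q s =
     lam * (log_sum_exp {1..N} (score v lam mu (Ginv sd (sigQ q s))) * q s)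
     - cond_mean N v p s * Ginv sd (sigQ q s) * q s
     - (\<Sum>n\<in>{1..N}. mu n * (p n s * q s))
     + lam * (\<Sum>n\<in>{1..N}. ln (p n s) * p n s * q s)"
proof -
  define z where "z = Ginv sd (sigQ q s)"
  have "lam * (\<Sum>n\<in>{1..N}. p n s * score v lam mu z n - p n s * ln (p n s))
      = (\<Sum>n\<in>{1..N}. v n * p n s * z + mu n * p n s - lam * (ln (p n s) * p n s))"
    unfolding sum_distrib_left using lam by (intro sum.cong) (auto simp: score_def field_simps)
  also have "\<dots> = cond_mean N v p s * z + (\<Sum>n\<in>{1..N}. mu n * p n s)
      - lam * (\<Sum>n\<in>{1..N}. ln (p n s) * p n s)"
    by (simp add: cond_mean_def sum.distrib sum_subtractf sum_distrib_left sum_distrib_right)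
  finally have lam_sum: "lam * (\<Sum>n\<in>{1..N}. p n s * score v lam mu z n - p n s * ln (p n s))
      = cond_mean N v p s * z + (\<Sum>n\<in>{1..N}. mu n * p n s) - lam * (\<Sum>n\<in>{1..N}. ln (p n s) * p n s)" .
  have "lam * gap_density N v lam sd mu p q s = lam * (log_sum_exp {1..N} (score v lam mu z) * q s)
      - lam * (\<Sum>n\<in>{1..N}. p n s * score v lam mu z n - p n s * ln (p n s)) * q s"
    by (simp add: gap_density_def gibbs_gap_def z_def algebra_simps)
  then show ?thesis
    unfolding lam_sum z_def[symmetric] by (simp add: sum_distrib_left algebra_simps)
qed

context
  fixes p :: "nat \<Rightarrow> real \<Rightarrow> real" and q :: "real \<Rightarrow> real"
  assumes q: "is_density q" and p: "posterior_family N p q"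
begin

lemma q_nonneg: "0 \<le> q s"
  using q by (simp add: is_density_def)

lemma q_eq_0_outside_supp: "s \<notin> supp q \<Longrightarrow> q s = 0"
  using q_nonneg[of s] by (simp add: supp_def)

lemma posterior_bounds: "s \<in> supp q \<Longrightarrow> n \<in> {1..N} \<Longrightarrow> 0 \<le> p n s \<and> p n s \<le> 1"
  using p posterior_family_le_1[OF p] by (auto simp: posterior_family_def)

lemma integrable_posterior_mult_density:
  assumes n: "n \<in> {1..N}"
  shows "integrable lborel (\<lambda>s. p n s * q s)"
    and "integrable lborel (\<lambda>s. ln (p n s) * p n s * q s)"
proof -
  have q_int: "integrable lborel q" and q_meas: "q \<in> borel_measurable borel"
    and p_meas: "p n \<in> borel_measurable borel"
    using q p n by (auto simp: is_density_def posterior_family_def)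
  have "\<bar>p n s\<bar> * q s \<le> q s" and "\<bar>ln (p n s) * p n s\<bar> * q s \<le> q s" for s
    using posterior_bounds[of s n] abs_ln_mult_self_le_1[of "p n s"] q_nonneg[of s]
      q_eq_0_outside_supp[of s] n
    by (cases "s \<in> supp q"; auto intro: mult_left_le_one_le)+
  then show "integrable lborel (\<lambda>s. p n s * q s)"
    and "integrable lborel (\<lambda>s. ln (p n s) * p n s * q s)"
    using q_nonneg p_meas q_meas
    by (auto intro!: Bochner_Integration.integrable_bound[OF q_int] AE_I2 simp: abs_mult)
qed

lemma integrable_cond_mean_score:
  "integrable lborel (\<lambda>s. cond_mean N v p s * Ginv sd (sigQ q s) * q s)"
proof (rule Bochner_Integration.integrable_bound)
  define K where "K = (\<Sum>n\<in>{1..N}. \<bar>v n\<bar>)"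
  show "integrable lborel (\<lambda>s. K * \<bar>Ginv sd (sigQ q s)\<bar> * q s)"
    using integrable_normal_score[OF sd q _ integrable_normal_meas_abs[OF sd]]
    by (simp add: mult.assoc)
  have "\<bar>cond_mean N v p s\<bar> \<le> K" if "s \<in> supp q" for s
  proof -
    have "\<bar>cond_mean N v p s\<bar> \<le> (\<Sum>n\<in>{1..N}. \<bar>v n * p n s\<bar>)"
      unfolding cond_mean_def by (rule sum_abs)
    also have "\<dots> = (\<Sum>n\<in>{1..N}. \<bar>v n\<bar> * p n s)"
      using posterior_bounds[OF that] by (intro sum.cong) (auto simp: abs_mult)
    also have "\<dots> \<le> K"
      unfolding K_def using posterior_bounds[OF that] by (intro sum_mono mult_left_le) auto
    finally show ?thesis .
  qed
  note cond_mean_bound = this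
  have "norm (cond_mean N v p s * Ginv sd (sigQ q s) * q s) \<le> norm (K * \<bar>Ginv sd (sigQ q s)\<bar> * q s)"
    for s
  proof (cases "s \<in> supp q")
    case True
    have "\<bar>cond_mean N v p s\<bar> * (\<bar>Ginv sd (sigQ q s)\<bar> * q s) \<le> K * (\<bar>Ginv sd (sigQ q s)\<bar> * q s)"
      using cond_mean_bound[OF True] q_nonneg[of s] by (intro mult_right_mono) auto
    moreover have "0 \<le> K"
      by (simp add: K_def sum_nonneg)
    ultimately show ?thesis
      using q_nonneg[of s] by (simp add: abs_mult mult.assoc)
  qed (simp add: q_eq_0_outside_supp)
  then show "AE s in lborel. norm (cond_mean N v p s * Ginv sd (sigQ q s) * q s)
      \<le> norm (K * \<bar>Ginv sd (sigQ q s)\<bar> * q s)"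
    by simp
  have "cond_mean N v p \<in> borel_measurable borel"
    using p unfolding cond_mean_def[abs_def] posterior_family_def
    by (intro borel_measurable_sum borel_measurable_times) auto
  then show "(\<lambda>s. cond_mean N v p s * Ginv sd (sigQ q s) * q s) \<in> borel_measurable lborel"
    using borel_measurable_normal_score[OF sd q] q by (auto simp: is_density_def)
qed

lemma gap_density_nonneg: "0 \<le> gap_density N v lam sd mu p q s"
proof (cases "s \<in> supp q")
  case True
  then have "0 \<le> gibbs_gap {1..N} (score v lam mu (Ginv sd (sigQ q s))) (\<lambda>n. p n s)"
    using p by (intro gibbs_gap_nonneg[OF index_set]) (auto simp: posterior_family_def)
  then show ?thesis
    unfolding gap_density_def using q_nonneg by simp
qed (simp add: gap_density_def q_eq_0_outside_supp)

text \<open>The duality identity: integrating \<open>lam\<close> times the gap density, the expected log-sum-exp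
  term becomes the Gaussian expectation in \<open>opt_value\<close> (the normal score of the signal is
  normal), and Bayes plausibility turns the \<open>mu\<close>-terms into \<open>\<Sum> mu n * pr n\<close>.\<close>

lemma objective_eq_opt_value_minus_gap:
  assumes bp: "bayes_plausible N pr p q"
  shows "integrable lborel (gap_density N v lam sd mu p q)"
    and "objective N v pr lam sd p q
      = opt_value N v pr lam sd mu - lam * (LINT s|lborel. gap_density N v lam sd mu p q s)"
proof -
  define LSE where "LSE = (\<lambda>s. log_sum_exp {1..N} (score v lam mu (Ginv sd (sigQ q s))) * q s)"
  define CM where "CM = (\<lambda>s. cond_mean N v p s * Ginv sd (sigQ q s) * q s)"
  define MU where "MU = (\<lambda>s. \<Sum>n\<in>{1..N}. mu n * (p n s * q s))"
  define ENT where "ENT = (\<lambda>s. \<Sum>n\<in>{1..N}. ln (p n s) * p n s * q s)"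
  have int: "integrable lborel LSE" "integrable lborel CM"
    "integrable lborel MU" "integrable lborel ENT"
    unfolding LSE_def CM_def MU_def ENT_def
    using integrable_normal_score[OF sd q _ integrable_log_sum_exp_score]
      integrable_cond_mean_score integrable_posterior_mult_density
    by (auto intro!: Bochner_Integration.integrable_sum)
  have lam_gap: "(\<lambda>s. lam * gap_density N v lam sd mu p q s)
      = (\<lambda>s. lam * LSE s - CM s - MU s + lam * ENT s)"
    by (simp add: fun_eq_iff lam_mult_gap_density LSE_def CM_def MU_def ENT_def)
  have "integrable lborel (\<lambda>s. lam * gap_density N v lam sd mu p q s)"
    unfolding lam_gap using int by auto
  then show "integrable lborel (gap_density N v lam sd mu p q)"
    using lam by simp
  have "(LINT s|lborel. LSE s) = (LINT z|normal_meas sd. log_sum_exp {1..N} (score v lam mu z))"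
    unfolding LSE_def by (rule integral_normal_score[OF sd q _ integrable_log_sum_exp_score]) simp
  moreover have "(LINT s|lborel. MU s) = (\<Sum>n\<in>{1..N}. mu n * pr n)"
    using bp integrable_posterior_mult_density(1)
    by (simp add: MU_def bayes_plausible_def Bochner_Integration.integral_sum)
  moreover have "(LINT s|lborel. ENT s) = (\<Sum>n\<in>{1..N}. LINT s|lborel. ln (p n s) * p n s * q s)"
    using integrable_posterior_mult_density(2)
    by (simp add: ENT_def Bochner_Integration.integral_sum)
  moreover have "lam * (LINT s|lborel. gap_density N v lam sd mu p q s)
      = lam * (LINT s|lborel. LSE s) - (LINT s|lborel. CM s) - (LINT s|lborel. MU s)
        + lam * (LINT s|lborel. ENT s)"
    using arg_cong[OF lam_gap, of "integral\<^sup>L lborel"] int by simp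
  ultimately show "objective N v pr lam sd p q
      = opt_value N v pr lam sd mu - lam * (LINT s|lborel. gap_density N v lam sd mu p q s)"
    by (simp add: objective_def opt_value_eq expected_log_sum_exp_def CM_def algebra_simps)
qed

lemma objective_le_opt_value:
  assumes "bayes_plausible N pr p q"
  shows "objective N v pr lam sd p q \<le> opt_value N v pr lam sd mu"
  using objective_eq_opt_value_minus_gap[OF assms, of mu] gap_density_nonneg lam
  by (simp add: Bochner_Integration.integral_nonneg)

lemma AE_eq_opt_post_if_objective_eq_opt_value:
  assumes bp: "bayes_plausible N pr p q"
    and eq: "objective N v pr lam sd p q = opt_value N v pr lam sd mu"
  shows "AE s in lborel. 0 < q s \<longrightarrow> (\<forall>n\<in>{1..N}. p n s = opt_post N v lam sd mu q n s)"
proof -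
  have "(LINT s|lborel. gap_density N v lam sd mu p q s) = 0"
    using objective_eq_opt_value_minus_gap[OF bp, of mu] eq lam by simp
  then have "AE s in lborel. gap_density N v lam sd mu p q s = 0"
    using objective_eq_opt_value_minus_gap(1)[OF bp] gap_density_nonneg
    by (subst (asm) integral_nonneg_eq_0_iff_AE) auto
  then show ?thesis
  proof eventually_elim
    case (elim s)
    show ?case
    proof
      assume "0 < q s"
      then have "s \<in> supp q"
        and "gibbs_gap {1..N} (score v lam mu (Ginv sd (sigQ q s))) (\<lambda>n. p n s) = 0"
        using elim by (auto simp: supp_def gap_density_def)
      then show "\<forall>n\<in>{1..N}. p n s = opt_post N v lam sd mu q n s"
        using p gibbs_gap_eq_0_iff[OF index_set]
        by (auto simp: opt_post_eq_softmax posterior_family_def)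
    qed
  qed
qed

end

text \<open>Since every normal score is normally distributed, Bayes plausibility of the logit posteriors
  does not depend on the signal density.\<close>

lemma bayes_plausible_opt_post_iff:
  assumes q: "is_density q"
  shows "bayes_plausible N pr (opt_post N v lam sd mu q) q
    \<longleftrightarrow> (\<forall>n\<in>{1..N}. mean_posterior N v lam sd mu n = pr n)"
proof -
  have "(LINT s|lborel. opt_post N v lam sd mu q n s * q s) = mean_posterior N v lam sd mu n"
    if "n \<in> {1..N}" for n
    unfolding opt_post_eq_softmax mean_posterior_def
    using integral_normal_score[OF sd q _ integrable_softmax_score[OF that]] by simp
  then show ?thesis
    by (auto simp: bayes_plausible_def)
qed

lemma objective_opt_post:
  assumes q: "is_density q" and bp: "bayes_plausible N pr (opt_post N v lam sd mu q) q"
  shows "objective N v pr lam sd (opt_post N v lam sd mu q) q = opt_value N v pr lam sd mu"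
proof -
  have "gap_density N v lam sd mu (opt_post N v lam sd mu q) q s = 0" for s
    using gibbs_gap_eq_0_iff[OF index_set] softmax_pos[OF index_set] sum_softmax[OF index_set]
    by (simp add: gap_density_def opt_post_eq_softmax less_imp_le)
  then show ?thesis
    using objective_eq_opt_value_minus_gap(2)[OF q posterior_family_opt_post[OF q] bp,
        where mu = mu]
    by simp
qed

lemma opt_post_add_const:
  assumes "\<forall>n\<in>{1..N}. mu' n = mu n + c" "n \<in> {1..N}"
  shows "opt_post N v lam sd mu' q n s = opt_post N v lam sd mu q n s"
  unfolding opt_post_eq_softmax using assms
  by (intro softmax_add_const[OF index_set, where c = "c / lam"])
    (auto simp: score_def add_divide_distrib)

text \<open>Uniqueness: both multipliers attain the optimal value, so by weak duality each attains the
  other's dual value, and the equality case of Gibbs' inequality at a single point of the support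
  identifies the two softmax vectors.\<close>

lemma bayes_plausible_opt_post_iff_add_const:
  assumes q: "is_density q" and bp: "bayes_plausible N pr (opt_post N v lam sd mu q) q"
  shows "bayes_plausible N pr (opt_post N v lam sd mu' q) q \<longleftrightarrow> (\<exists>c. \<forall>n\<in>{1..N}. mu' n = mu n + c)"
proof
  let ?P = "opt_post N v lam sd mu q" and ?P' = "opt_post N v lam sd mu' q"
  assume bp': "bayes_plausible N pr ?P' q"
  have "objective N v pr lam sd ?P' q = opt_value N v pr lam sd mu"
    using objective_le_opt_value[OF q posterior_family_opt_post[OF q], of pr]
      objective_opt_post[OF q] bp bp' by (metis order_antisym)
  then have "AE s in lborel. 0 < q s \<longrightarrow> (\<forall>n\<in>{1..N}. ?P' n s = ?P n s)"
    by (rule AE_eq_opt_post_if_objective_eq_opt_value[OF q posterior_family_opt_post[OF q] bp'])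
  then obtain s where "0 < q s" "\<forall>n\<in>{1..N}. ?P' n s = ?P n s"
    by (rule AE_imp_ex_density_pos[OF q])
  then have "\<forall>n\<in>{1..N}. softmax {1..N} (score v lam mu' (Ginv sd (sigQ q s))) n
      = softmax {1..N} (score v lam mu (Ginv sd (sigQ q s))) n"
    by (simp add: opt_post_eq_softmax)
  then obtain c where "\<forall>n\<in>{1..N}. score v lam mu' (Ginv sd (sigQ q s)) n
      = score v lam mu (Ginv sd (sigQ q s)) n + c"
    using softmax_eq_imp_add_const[OF index_set] by blast
  then have "\<forall>n\<in>{1..N}. mu' n = mu n + lam * c"
    using lam by (auto simp: score_def field_simps)
  then show "\<exists>c. \<forall>n\<in>{1..N}. mu' n = mu n + c"
    by blast
next
  assume "\<exists>c. \<forall>n\<in>{1..N}. mu' n = mu n + c"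
  then obtain c where c: "\<forall>n\<in>{1..N}. mu' n = mu n + c"
    by blast
  have "opt_post N v lam sd mu' q n s = opt_post N v lam sd mu q n s" if "n \<in> {1..N}" for n s
    using opt_post_add_const[OF c that] .
  then show "bayes_plausible N pr (opt_post N v lam sd mu' q) q"
    using bp by (simp add: bayes_plausible_def)
qed

lemma weak_duality:
  assumes "signal_structure N v p q" "bayes_plausible N pr p q"
  shows "objective N v pr lam sd p q \<le> opt_value N v pr lam sd mu"
  using assms objective_le_opt_value by (simp add: signal_structure_iff)

lemma AE_eq_opt_post_if_optimal:
  assumes "signal_structure N v p q" "bayes_plausible N pr p q"
    and "objective N v pr lam sd p q = opt_value N v pr lam sd mu"
  shows "AE s in lborel. 0 < q s \<longrightarrow> (\<forall>n\<in>{1..N}. p n s = opt_post N v lam sd mu q n s)"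
  using assms AE_eq_opt_post_if_objective_eq_opt_value by (simp add: signal_structure_iff)

lemma signal_structure_opt_post:
  assumes "is_density q" "strict_mono_on (supp q) (cond_mean N v (opt_post N v lam sd mu q))"
  shows "signal_structure N v (opt_post N v lam sd mu q) q"
  using assms posterior_family_opt_post by (simp add: signal_structure_iff)

lemma distr_cond_mean_opt_post:
  assumes q: "is_density q"
  shows "distr (sig_meas q) borel (cond_mean N v (opt_post N v lam sd mu q))
    = distr (normal_meas sd) borel (logit_mean N v lam mu)"
proof -
  have "cond_mean N v (opt_post N v lam sd mu q) = logit_mean N v lam mu \<circ> (\<lambda>s. Ginv sd (sigQ q s))"
    by (simp add: fun_eq_iff cond_mean_def opt_post_eq_softmax logit_mean_eq_softmax)
  moreover have "logit_mean N v lam mu \<in> borel_measurable borel"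
    unfolding logit_mean_def by measurable
  moreover have "(\<lambda>s. Ginv sd (sigQ q s)) \<in> borel_measurable (sig_meas q)"
    using borel_measurable_normal_score[OF sd q] by (simp add: sig_meas_def)
  ultimately show ?thesis
    using distr_distr[of "logit_mean N v lam mu" borel borel "\<lambda>s. Ginv sd (sigQ q s)" "sig_meas q"]
      distr_normal_score[OF sd q] by simp
qed

lemma integrable_score: "integrable (normal_meas sd) (\<lambda>z. score v lam mu z k)"
  unfolding score_def add_divide_distrib
  by (intro Bochner_Integration.integrable_add Bochner_Integration.integrable_divide
      Bochner_Integration.integrable_mult_right integrable_normal_meas_id[OF sd]
      integrable_normal_meas_const[OF sd])

lemma integral_score: "(LINT z|normal_meas sd. score v lam mu z k) = mu k / lam"
  using integrable_normal_meas_id[OF sd] integrable_normal_meas_const[OF sd]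
  by (simp add: score_def add_divide_distrib integral_normal_meas_id[OF sd]
      integral_normal_meas_const[OF sd] del: lebesgue_integral_const)

lemma le_expected_log_sum_exp:
  assumes "k \<in> {1..N}"
  shows "mu k \<le> lam * expected_log_sum_exp N v lam sd mu"
proof -
  have "mu k / lam \<le> expected_log_sum_exp N v lam sd mu"
    unfolding expected_log_sum_exp_def integral_score[symmetric]
    using log_sum_exp_ge[OF index_set assms]
    by (intro integral_mono integrable_score integrable_log_sum_exp_score)
  then show ?thesis
    using lam by (simp add: field_simps)
qed

lemma expected_log_sum_exp_add_const:
  assumes "\<forall>n\<in>{1..N}. mu' n = mu n + c"
  shows "expected_log_sum_exp N v lam sd mu' = expected_log_sum_exp N v lam sd mu + c / lam"
proof -
  have "log_sum_exp {1..N} (score v lam mu' z)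
      = log_sum_exp {1..N} (score v lam mu z) + c / lam" for z
    using assms
    by (intro log_sum_exp_add_const[OF index_set]) (simp add: score_def add_divide_distrib)
  then show ?thesis
    using integrable_log_sum_exp_score integrable_normal_meas_const[OF sd]
    by (simp add: expected_log_sum_exp_def integral_normal_meas_const[OF sd]
        del: lebesgue_integral_const)
qed

lemma expected_log_sum_exp_le_add:
  assumes "\<And>z. log_sum_exp {1..N} (score v lam mu' z) \<le> log_sum_exp {1..N} (score v lam mu z) + D"
  shows "expected_log_sum_exp N v lam sd mu' \<le> expected_log_sum_exp N v lam sd mu + D"
proof -
  have "expected_log_sum_exp N v lam sd mu'
      \<le> (LINT z|normal_meas sd. log_sum_exp {1..N} (score v lam mu z) + D)"
    unfolding expected_log_sum_exp_def using assms
    by (intro integral_mono integrable_log_sum_exp_score Bochner_Integration.integrable_add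
        integrable_normal_meas_const[OF sd])
  also have "\<dots> = expected_log_sum_exp N v lam sd mu + D"
    using integrable_log_sum_exp_score integrable_normal_meas_const[OF sd]
    by (simp add: expected_log_sum_exp_def integral_normal_meas_const[OF sd]
        del: lebesgue_integral_const)
  finally show ?thesis .
qed

lemma abs_expected_log_sum_exp_diff_le:
  "\<bar>expected_log_sum_exp N v lam sd mu' - expected_log_sum_exp N v lam sd mu\<bar>
    \<le> (\<Sum>n\<in>{1..N}. \<bar>mu' n - mu n\<bar>) / lam"
proof -
  define D where "D = (\<Sum>n\<in>{1..N}. \<bar>mu' n - mu n\<bar>) / lam"
  have "\<bar>mu' n - mu n\<bar> / lam \<le> D" if "n \<in> {1..N}" for n
    unfolding D_def using that lam by (intro divide_right_mono member_le_sum) auto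
  moreover have "(mu' n - mu n) / lam \<le> \<bar>mu' n - mu n\<bar> / lam"
    and "- ((mu' n - mu n) / lam) \<le> \<bar>mu' n - mu n\<bar> / lam" for n
    using lam by (auto simp: minus_divide_left intro!: divide_right_mono)
  moreover have "score v lam mu' z n = score v lam mu z n + (mu' n - mu n) / lam" for z n
    by (simp add: score_def add_divide_distrib diff_divide_distrib)
  ultimately have "\<forall>n\<in>{1..N}. score v lam mu' z n \<le> score v lam mu z n + D"
    and "\<forall>n\<in>{1..N}. score v lam mu z n \<le> score v lam mu' z n + D" for z
    by (smt (verit))+
  then have "expected_log_sum_exp N v lam sd mu' \<le> expected_log_sum_exp N v lam sd mu + D"
    and "expected_log_sum_exp N v lam sd mu \<le> expected_log_sum_exp N v lam sd mu' + D"
    by (blast intro: expected_log_sum_exp_le_add log_sum_exp_mono[OF index_set])+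
  then show ?thesis
    unfolding D_def by linarith
qed

lemma isCont_expected_log_sum_exp: "isCont (expected_log_sum_exp N v lam sd) x"
proof -
  have "((\<lambda>y. y n) \<longlongrightarrow> x n) (at x)" for n
    using isCont_coordinate[of _ n] unfolding isCont_def .
  then have "((\<lambda>y. \<Sum>n\<in>{1..N}. \<bar>y n - x n\<bar>) \<longlongrightarrow> (\<Sum>n\<in>{1..N}. \<bar>x n - x n\<bar>)) (at x)"
    by (intro tendsto_sum tendsto_rabs tendsto_diff tendsto_const)
  then have "((\<lambda>y. (\<Sum>n\<in>{1..N}. \<bar>y n - x n\<bar>) / lam) \<longlongrightarrow> 0) (at x)"
    by (intro tendsto_divide_zero) simp
  then have "((\<lambda>y. expected_log_sum_exp N v lam sd y - expected_log_sum_exp N v lam sd x)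
      \<longlongrightarrow> 0) (at x)"
    by (rule Lim_null_comparison[OF always_eventually, rotated])
      (use abs_expected_log_sum_exp_diff_le in simp)
  then show ?thesis
    unfolding isCont_def by (rule LIM_zero_cancel)
qed

lemma mean_posterior_bounds:
  assumes "n \<in> {1..N}"
  shows "0 \<le> mean_posterior N v lam sd mu n" "mean_posterior N v lam sd mu n \<le> 1"
proof -
  show "0 \<le> mean_posterior N v lam sd mu n"
    unfolding mean_posterior_def using softmax_pos[OF index_set]
    by (intro Bochner_Integration.integral_nonneg) (simp add: less_imp_le)
  have "mean_posterior N v lam sd mu n \<le> (LINT z|normal_meas sd. 1)"
    unfolding mean_posterior_def using softmax_le_1[OF index_set assms]
    by (intro integral_mono integrable_softmax_score[OF assms] integrable_normal_meas_const[OF sd])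
      auto
  then show "mean_posterior N v lam sd mu n \<le> 1"
    by (simp add: integral_normal_meas_const[OF sd] del: lebesgue_integral_const)
qed

lemma sum_mean_posterior: "(\<Sum>n\<in>{1..N}. mean_posterior N v lam sd mu n) = 1"
proof -
  have "(\<Sum>n\<in>{1..N}. mean_posterior N v lam sd mu n)
      = (LINT z|normal_meas sd. (\<Sum>n\<in>{1..N}. softmax {1..N} (score v lam mu z) n))"
    unfolding mean_posterior_def using integrable_softmax_score
    by (simp add: Bochner_Integration.integral_sum)
  also have "\<dots> = 1"
    using sum_softmax[OF index_set]
    by (simp add: integral_normal_meas_const[OF sd] del: lebesgue_integral_const)
  finally show ?thesis .
qed

end

locale logit_model_prior = logit_model +
  fixes pr :: "nat \<Rightarrow> real"
  assumes pr_pos: "\<forall>n\<in>{1..N}. 0 < pr n" and sum_pr: "(\<Sum>n\<in>{1..N}. pr n) = 1"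
begin

lemma opt_value_add_const:
  assumes "\<forall>n\<in>{1..N}. mu' n = mu n + c"
  shows "opt_value N v pr lam sd mu' = opt_value N v pr lam sd mu"
proof -
  have "(\<Sum>n\<in>{1..N}. mu' n * pr n) = (\<Sum>n\<in>{1..N}. mu n * pr n + c * pr n)"
    using assms by (intro sum.cong) (auto simp: algebra_simps)
  also have "\<dots> = (\<Sum>n\<in>{1..N}. mu n * pr n) + c"
    using sum_pr by (simp add: sum.distrib sum_distrib_left[symmetric])
  finally show ?thesis
    using expected_log_sum_exp_add_const[OF assms] lam by (simp add: opt_value_eq algebra_simps)
qed

text \<open>Coercivity modulo shifts: \<open>mu k \<le> lam * expected_log_sum_exp\<close> at a largest coordinate \<open>k\<close>
  bounds the spread of \<open>mu\<close> by the excess of \<open>opt_value\<close> over its constant part.\<close>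

lemma opt_value_lower_bound:
  defines "C \<equiv> lam * (\<Sum>n\<in>{1..N}. ln (pr n) * pr n)"
  shows "C \<le> opt_value N v pr lam sd mu"
    and "mu 1 = 0 \<Longrightarrow> j \<in> {1..N} \<Longrightarrow>
      \<bar>mu j\<bar> \<le> (opt_value N v pr lam sd mu - C) * (\<Sum>n\<in>{1..N}. 1 / pr n)"
proof -
  define D where "D = opt_value N v pr lam sd mu - C"
  obtain k where k: "k \<in> {1..N}" "\<forall>n\<in>{1..N}. mu n \<le> mu k"
    using Max_in[of "mu ` {1..N}"] Max_ge[of "mu ` {1..N}"] index_set by fastforce
  have "(\<Sum>n\<in>{1..N}. pr n * (mu k - mu n)) = mu k - (\<Sum>n\<in>{1..N}. mu n * pr n)"
    using sum_pr by (simp add: algebra_simps sum_subtractf sum_distrib_left[symmetric])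
  also have "\<dots> \<le> D"
    using le_expected_log_sum_exp[OF k(1)] by (simp add: D_def C_def opt_value_eq)
  finally have spread: "(\<Sum>n\<in>{1..N}. pr n * (mu k - mu n)) \<le> D" .
  have terms: "0 \<le> pr n * (mu k - mu n)" if "n \<in> {1..N}" for n
    using pr_pos k(2) that by (simp add: less_imp_le)
  then show "C \<le> opt_value N v pr lam sd mu"
    using spread sum_nonneg[of "{1..N}" "\<lambda>n. pr n * (mu k - mu n)"] by (simp add: D_def)
  then have D_nonneg: "0 \<le> D"
    by (simp add: D_def)
  have "mu k - mu j \<le> D * (\<Sum>n\<in>{1..N}. 1 / pr n)" if j: "j \<in> {1..N}" for j
  proof -
    have "pr j * (mu k - mu j) \<le> (\<Sum>n\<in>{1..N}. pr n * (mu k - mu n))"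
      using j terms by (intro member_le_sum) auto
    then have "pr j * (mu k - mu j) \<le> D"
      using spread by linarith
    moreover have "0 < pr j"
      using pr_pos j by auto
    ultimately have "mu k - mu j \<le> D * (1 / pr j)"
      by (simp add: pos_le_divide_eq mult.commute)
    also have "\<dots> \<le> D * (\<Sum>n\<in>{1..N}. 1 / pr n)"
      using D_nonneg pr_pos j by (intro mult_left_mono member_le_sum) (auto simp: less_imp_le)
    finally show ?thesis .
  qed
  note spread_le = this
  assume "mu 1 = 0" and j: "j \<in> {1..N}"
  have "1 \<in> {1..N}"
    using N by simp
  then show "\<bar>mu j\<bar> \<le> (opt_value N v pr lam sd mu - C) * (\<Sum>n\<in>{1..N}. 1 / pr n)"
    using spread_le[of 1] spread_le[OF j] k(2) j \<open>mu 1 = 0\<close> unfolding D_def abs_le_iff by force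
qed

lemma continuous_on_opt_value: "continuous_on UNIV (opt_value N v pr lam sd)"
proof -
  have "opt_value N v pr lam sd = (\<lambda>mu. lam * expected_log_sum_exp N v lam sd mu
      + lam * (\<Sum>n\<in>{1..N}. ln (pr n) * pr n) - (\<Sum>n\<in>{1..N}. mu n * pr n))"
    by (simp add: fun_eq_iff opt_value_eq)
  moreover have "isCont (\<lambda>mu. lam * expected_log_sum_exp N v lam sd mu
      + lam * (\<Sum>n\<in>{1..N}. ln (pr n) * pr n) - (\<Sum>n\<in>{1..N}. mu n * pr n)) x" for x
    by (intro continuous_intros isCont_expected_log_sum_exp isCont_coordinate)
  ultimately show ?thesis
    by (simp add: continuous_at_imp_continuous_on)
qed

text \<open>By shift invariance and coercivity it suffices to minimise over the compact box of
  multipliers with \<open>mu 1 = 0\<close> whose value does not exceed that of \<open>mu = 0\<close>.\<close>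

lemma opt_value_attains_min: "\<exists>m. \<forall>mu. opt_value N v pr lam sd m \<le> opt_value N v pr lam sd mu"
proof -
  let ?F = "opt_value N v pr lam sd"
  define C where "C = lam * (\<Sum>n\<in>{1..N}. ln (pr n) * pr n)"
  define W where "W = (\<Sum>n\<in>{1..N}. 1 / pr n)"
  define R where "R = (?F (\<lambda>_. 0) - C) * W"
  define K where "K = PiE UNIV (\<lambda>i. if i \<in> {1..N} then {-R..R} else {0 :: real})"
  have W: "0 \<le> W"
    unfolding W_def using pr_pos by (intro sum_nonneg) (simp add: less_imp_le)
  then have "0 \<le> R"
    using opt_value_lower_bound(1)[of "\<lambda>_. 0"] by (simp add: R_def C_def)
  then have zero: "(\<lambda>_. 0) \<in> K"
    by (simp add: K_def PiE_iff)
  have "compactin (product_topology (\<lambda>_. euclidean) UNIV) K"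
    unfolding K_def by (simp add: compactin_PiE)
  then have "compact K"
    by (simp add: euclidean_product_topology)
  moreover have "K \<noteq> {}"
    using zero by blast
  moreover have "continuous_on K ?F"
    using continuous_on_opt_value by (rule continuous_on_subset) simp
  ultimately obtain m where m: "\<forall>y\<in>K. ?F m \<le> ?F y"
    using continuous_attains_inf by blast
  have "?F m \<le> ?F mu" for mu
  proof -
    define mu' where "mu' n = (if n \<in> {1..N} then mu n - mu 1 else 0)" for n
    have "?F mu' = ?F mu"
      by (rule opt_value_add_const[where c = "- mu 1"]) (simp add: mu'_def)
    moreover have "mu' \<in> K" if le: "?F mu' \<le> ?F (\<lambda>_. 0)"
    proof -
      have "mu' 1 = 0"
        using N by (simp add: mu'_def)
      have "mu' i \<in> (if i \<in> {1..N} then {-R..R} else {0})" for i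
      proof (cases "i \<in> {1..N}")
        case True
        have "\<bar>mu' i\<bar> \<le> (?F mu' - C) * W"
          using opt_value_lower_bound(2)[of mu' i, OF \<open>mu' 1 = 0\<close> True] by (simp add: C_def W_def)
        also have "\<dots> \<le> R"
          unfolding R_def using le W by (intro mult_right_mono) auto
        finally show ?thesis
          using True by (simp add: abs_le_iff)
      qed (auto simp: mu'_def)
      then show ?thesis
        by (simp add: K_def PiE_iff)
    qed
    ultimately show ?thesis
      using m zero by (cases "?F mu' \<le> ?F (\<lambda>_. 0)") force+
  qed
  then show ?thesis
    by blast
qed

text \<open>Raising \<open>m k\<close> by \<open>lam * e\<close> lowers \<open>opt_value\<close> by \<open>lam * e * pr k\<close> and raises it by at most
  \<open>lam * (exp e - 1) * mean_posterior m k\<close>; minimality and \<open>e \<rightarrow> 0\<close> give the claim.\<close>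

lemma prior_le_mean_posterior_at_min:
  assumes min: "\<forall>mu. opt_value N v pr lam sd m \<le> opt_value N v pr lam sd mu" and k: "k \<in> {1..N}"
  shows "pr k \<le> mean_posterior N v lam sd m k"
proof -
  let ?P = "mean_posterior N v lam sd m k"
  have step: "e * pr k \<le> (exp e - 1) * ?P" for e
  proof -
    define m' where "m' = m(k := m k + lam * e)"
    have "log_sum_exp {1..N} (score v lam m' z) \<le> log_sum_exp {1..N} (score v lam m z)
        + (exp e - 1) * softmax {1..N} (score v lam m z) k" for z
      using log_sum_exp_update_le[OF index_set k, of "score v lam m z" e] lam
      by (simp add: m'_def score_update)
    then have "expected_log_sum_exp N v lam sd m' \<le>
        (LINT z|normal_meas sd. log_sum_exp {1..N} (score v lam m z)
          + (exp e - 1) * softmax {1..N} (score v lam m z) k)"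
      unfolding expected_log_sum_exp_def
      by (intro integral_mono integrable_log_sum_exp_score Bochner_Integration.integrable_add
          Bochner_Integration.integrable_mult_right integrable_softmax_score[OF k])
    also have "\<dots> = expected_log_sum_exp N v lam sd m + (exp e - 1) * ?P"
      using integrable_log_sum_exp_score integrable_softmax_score[OF k]
      by (simp add: expected_log_sum_exp_def mean_posterior_def)
    finally have "lam * (expected_log_sum_exp N v lam sd m' - expected_log_sum_exp N v lam sd m)
        \<le> lam * ((exp e - 1) * ?P)"
      using lam by (intro mult_left_mono) auto
    moreover have "(\<Sum>n\<in>{1..N}. m' n * pr n)
        = (\<Sum>n\<in>{1..N}. m n * pr n + (if n = k then lam * e * pr k else 0))"
      by (intro sum.cong) (auto simp: m'_def algebra_simps)
    then have "(\<Sum>n\<in>{1..N}. m' n * pr n) = (\<Sum>n\<in>{1..N}. m n * pr n) + lam * e * pr k"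
      using k by (simp add: sum.distrib)
    moreover have "opt_value N v pr lam sd m \<le> opt_value N v pr lam sd m'"
      using min by blast
    ultimately have "lam * (e * pr k) \<le> lam * ((exp e - 1) * ?P)"
      by (simp add: opt_value_eq algebra_simps)
    then show ?thesis
      using lam by simp
  qed
  have P: "0 \<le> ?P" "?P \<le> 1"
    using mean_posterior_bounds[OF k] by auto
  have "pr k \<le> 1"
    using member_le_sum[of k "{1..N}" pr] k pr_pos sum_pr by (simp add: less_imp_le)
  show ?thesis
  proof (rule field_le_epsilon)
    fix e :: real
    assume e: "0 < e"
    show "pr k \<le> ?P + e"
    proof (cases "e \<le> 1")
      case True
      have "e * pr k \<le> (exp e - 1) * ?P"
        by (rule step)
      also have "\<dots> \<le> (e + e\<^sup>2) * ?P"
        using exp_bound[of e] e True P by (intro mult_right_mono) auto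
      finally have "e * pr k \<le> e * ((1 + e) * ?P)"
        by (simp add: power2_eq_square algebra_simps)
      then have "pr k \<le> (1 + e) * ?P"
        using e by (simp only: mult_le_cancel_left_pos)
      then have "pr k \<le> ?P + e * ?P"
        by (simp add: algebra_simps)
      also have "\<dots> \<le> ?P + e"
        using e P by (simp add: mult_left_le)
      finally show ?thesis .
    qed (use \<open>pr k \<le> 1\<close> P in simp)
  qed
qed

lemma exists_mean_posterior_eq_prior: "\<exists>mu. \<forall>n\<in>{1..N}. mean_posterior N v lam sd mu n = pr n"
proof -
  obtain m where min: "\<forall>mu. opt_value N v pr lam sd m \<le> opt_value N v pr lam sd mu"
    using opt_value_attains_min by blast
  have nonneg: "0 \<le> mean_posterior N v lam sd m n - pr n" if "n \<in> {1..N}" for n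
    using prior_le_mean_posterior_at_min[OF min that] by simp
  have "(\<Sum>n\<in>{1..N}. mean_posterior N v lam sd m n - pr n) = 0"
    using sum_mean_posterior sum_pr by (simp add: sum_subtractf)
  then have "\<forall>n\<in>{1..N}. mean_posterior N v lam sd m n - pr n = 0"
    using sum_nonneg_eq_0_iff[OF index_set(1), where f = "\<lambda>n. mean_posterior N v lam sd m n - pr n"]
      nonneg by blast
  then show ?thesis
    by auto
qed

end

theorem proposition5:
  fixes N :: nat and v pr :: "nat \<Rightarrow> real" and lam \<sigma>Z T :: real
  assumes "N \<ge> 2"
    and "inj_on v {1..N}"
    and "\<forall>n\<in>{1..N}. 0 < pr n"
    and "(\<Sum>n\<in>{1..N}. pr n) = 1"
    and "0 < lam" and "0 < \<sigma>Z" and "0 < T"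
  shows "\<forall>q. is_density q \<longrightarrow>
    (\<exists>mu.
      \<comment> \<open>(i) Bayes plausibility of the logit posteriors: mu exists, unique up to a common constant\<close>
      (\<forall>mu'. bayes_plausible N pr (opt_post N v lam (\<sigma>Z * sqrt T) mu' q) q
              \<longleftrightarrow> (\<exists>c. \<forall>n\<in>{1..N}. mu' n = mu n + c))
      \<comment> \<open>(i)/(ii) the logit posteriors attain the value, which bounds every feasible structure\<close>
    \<and> objective N v pr lam (\<sigma>Z * sqrt T) (opt_post N v lam (\<sigma>Z * sqrt T) mu q) q
        = opt_value N v pr lam (\<sigma>Z * sqrt T) mu
    \<and> (\<forall>p' q'. signal_structure N v p' q' \<and> bayes_plausible N pr p' q' \<longrightarrow>
         objective N v pr lam (\<sigma>Z * sqrt T) p' q' \<le> opt_value N v pr lam (\<sigma>Z * sqrt T) mu)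
      \<comment> \<open>(i) any optimal posterior with signal density q is the logit one (a.e. on the support)\<close>
    \<and> (\<forall>p. signal_structure N v p q \<and> bayes_plausible N pr p q
           \<and> objective N v pr lam (\<sigma>Z * sqrt T) p q = opt_value N v pr lam (\<sigma>Z * sqrt T) mu \<longrightarrow>
         (AE s in lborel. 0 < q s \<longrightarrow>
            (\<forall>n\<in>{1..N}. p n s = opt_post N v lam (\<sigma>Z * sqrt T) mu q n s)))
      \<comment> \<open>(ii) if E[v|s] is strictly increasing, (logit posteriors, q) is a feasible signal structure\<close>
    \<and> (strict_mono_on (supp q) (cond_mean N v (opt_post N v lam (\<sigma>Z * sqrt T) mu q)) \<longrightarrow>
         signal_structure N v (opt_post N v lam (\<sigma>Z * sqrt T) mu q) q)
      \<comment> \<open>(iii) distribution of E[v|s] equals that of the logit mean of z ~ N(0, sigma_Z^2 T)\<close>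
    \<and> distr (sig_meas q) borel (cond_mean N v (opt_post N v lam (\<sigma>Z * sqrt T) mu q))
        = distr (normal_meas (\<sigma>Z * sqrt T)) borel (logit_mean N v lam mu))"
proof -
  interpret logit_model_prior N v lam "\<sigma>Z * sqrt T" pr
    using assms by unfold_locales auto
  obtain mu where mu: "\<forall>n\<in>{1..N}. mean_posterior N v lam (\<sigma>Z * sqrt T) mu n = pr n"
    using exists_mean_posterior_eq_prior by blast
  have bp: "bayes_plausible N pr (opt_post N v lam (\<sigma>Z * sqrt T) mu q) q" if "is_density q" for q
    using bayes_plausible_opt_post_iff[OF that] mu by simp
  show ?thesis
    using bp bayes_plausible_opt_post_iff_add_const objective_opt_post weak_duality
      AE_eq_opt_post_if_optimal signal_structure_opt_post distr_cond_mean_opt_post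
    by (intro allI impI exI[of _ mu] conjI) blast+
qed

end
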